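(* Let $K\ge 2$ be fixed and let $P^\star=(P^\star_{pq})_{p,q\in\{1,\dots,K\}}$ be a fixed real $K\times K$ matrix. For each $N\ge 1$ let $z^{\star,N}\in\{1,\dots,K\}^N$ be a deterministic label vector and let $X^N=(X_{ij})_{i,j\in\{1,\dots,N\}}$ be a random matrix whose entries are independent, take values in $[0,1]$, and are such that for all $p,q$ the variables $(X_{ij})_{i\in I_p(z^{\star,N}),\,j\in I_q(z^{\star,N})}$ are identically distributed with $\mathbb{E}[X_{ij}]=P^\star_{pq}$. Assume: (A1) (identifiability) $\delta^\star:=\min_{p_1\neq p_2}\max_{q}\big(|P^\star_{p_1q}-P^\star_{p_2q}|+|P^\star_{qp_1}-P^\star_{qp_2}|\big)>0$; (A2) (no drained class) there is $\gamma\in(0,1/K]$ such that for every $\gamma'\in(0,\gamma)$, $z^{\star,N}\in\mathcal{Z}^N_{\gamma'}$ for all $N$ large enough. For each $N$ let $\widehat z^N$ be a random element of $\arg\min_{z\in\{1,\dots,K\}^N}\widehat L_N(z)$, and assume further that there exist deterministic constants $\gamma_0\in(0,1/K]$, $\delta_0>0$ and $N_1$ such that for all $N\ge N_1$, almost surely $\widehat z^N\in\mathcal{Z}^N_{\gamma_0}$ and $\overline{\delta}(\widehat z^N)\ge\delta_0$. Then $\Delta_N(z^{\star,N},\widehat z^N)\to 0$ almost surely as $N\to\infty$, and for every $\gamma'\in(0,\gamma_0)$ and any norm $\|\cdot\|$ on $\mathbb{R}^{K\times K}$, $\max_{z\in\mathcal{Z}^N_{\gamma'}}\|\widehat P(z)-\overline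 P(z)\|\to0$ almost surely. More precisely, for every $r\in(0,1/3)$ there exist $C>0$ and $N_0$ such that for all $N\ge N_0$, $$\mathbb{P}\big(\Delta_N(z^{\star,N},\widehat z^N)\le C N^{-r}\big)\ge 1-e^{-N}.$$
   Context: Notation: $\{1,\dots,K\}^N$ is the set of label vectors $z=(z_i)_{i=1}^N$. For $z$ and $p\in\{1,\dots,K\}$, $I_p(z)=\{i: z_i=p\}$ and $N_p(z)=|I_p(z)|$. Given the $N\times N$ matrix $X$: $\widehat\mu_{iq}(z)=\frac{1}{N_q(z)}\sum_{j\in I_q(z)}X_{ij}$ if $N_q(z)\neq0$, else $0$; $\widehat\nu_{pj}(z)=\frac{1}{N_p(z)}\sum_{i\in I_p(z)}X_{ij}$ if $N_p(z)\ne0$, else $0$; $\widehat P_{pq}(z)=\frac{1}{N_p(z)N_q(z)}\sum_{i\in I_p(z)}\sum_{j\in I_q(z)}X_{ij}$ if $N_p(z)N_q(z)\ne0$, else $0$. For deterministic $z$, $\overline P_{pq}(z):=\mathbb{E}[\widehat P_{pq}(z)]$ (and this function of $z$ is then evaluated at random $z$ when needed). Objective: $\widehat L_N(z)=\frac1N\sum_{i=1}^N\sum_{q=1}^K\big(|\widehat\mu_{iq}(z)-\widehat P_{z_iq}(z)|+|\widehat\nu_{qi}(z)-\widehat P_{qz_i}(z)|\big)$ (i.e. the average $\ell^1$ distance between the vector $(\widehat\mu_{iq}(z))_q,(\widehat\nu_{qi}(z))_q$ and $(\widehat P_{z_iq}(z))_q,(\widehat P_{qz_i}(z))_q$ in $\mathbb{R}^{2K}$).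 $\overline{\delta}(z)=\min_{p_1\ne p_2}\max_q\big(|\overline P_{p_1q}(z)-\overline P_{p_2q}(z)|+|\overline P_{qp_1}(z)-\overline P_{qp_2}(z)|\big)$. $\mathcal{Z}^N_{\gamma}=\{z\in\{1,\dots,K\}^N: N_p(z)/N\ge\gamma \text{ for all } p\}$. $\Delta_N(z,z')=\frac{K}{N^2(K-1)}\sum_{i,j=1}^N\mathbb{1}_{z_i=z_j}\mathbb{1}_{z'_i\neq z'_j}$. *)

theory Defs
  imports "HOL-Probability.Probability"
begin

text \<open>Label vectors z in {1..K}^N, represented as extensional functions on {1..N}.
Matrices X are functions nat => nat => real, indexed from 1.\<close>

definition labels :: "nat \<Rightarrow> nat \<Rightarrow> (nat \<Rightarrow> nat) set" where
  "labels K N = PiE {1..N} (\<lambda>_. {1..K})"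

definition Icl :: "nat \<Rightarrow> (nat \<Rightarrow> nat) \<Rightarrow> nat \<Rightarrow> nat set" where
  "Icl N z p = {i \<in> {1..N}. z i = p}"

definition Ncl :: "nat \<Rightarrow> (nat \<Rightarrow> nat) \<Rightarrow> nat \<Rightarrow> nat" where
  "Ncl N z p = card (Icl N z p)"

definition mu_hat :: "nat \<Rightarrow> (nat \<Rightarrow> nat \<Rightarrow> real) \<Rightarrow> (nat \<Rightarrow> nat) \<Rightarrow> nat \<Rightarrow> nat \<Rightarrow> real" where
  "mu_hat N X z i q = (if Ncl N z q \<noteq> 0
     then (\<Sum>j\<in>Icl N z q. X i j) / real (Ncl N z q) else 0)"

definition nu_hat :: "nat \<Rightarrow> (nat \<Rightarrow> nat \<Rightarrow> real) \<Rightarrow> (nat \<Rightarrow> nat) \<Rightarrow> nat \<Rightarrow> nat \<Rightarrow> real" where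
  "nu_hat N X z p j = (if Ncl N z p \<noteq> 0
     then (\<Sum>i\<in>Icl N z p. X i j) / real (Ncl N z p) else 0)"

definition P_hat :: "nat \<Rightarrow> (nat \<Rightarrow> nat \<Rightarrow> real) \<Rightarrow> (nat \<Rightarrow> nat) \<Rightarrow> nat \<Rightarrow> nat \<Rightarrow> real" where
  "P_hat N X z p q = (if Ncl N z p * Ncl N z q \<noteq> 0
     then (\<Sum>i\<in>Icl N z p. \<Sum>j\<in>Icl N z q. X i j) / (real (Ncl N z p) * real (Ncl N z q))
     else 0)"

definition L_hat :: "nat \<Rightarrow> nat \<Rightarrow> (nat \<Rightarrow> nat \<Rightarrow> real) \<Rightarrow> (nat \<Rightarrow> nat) \<Rightarrow> real" where
  "L_hat K N X z = (1 / real N) * (\<Sum>i\<in>{1..N}. \<Sum>q\<in>{1..K}.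
      \<bar>mu_hat N X z i q - P_hat N X z (z i) q\<bar> + \<bar>nu_hat N X z q i - P_hat N X z q (z i)\<bar>)"

definition sep :: "nat \<Rightarrow> (nat \<Rightarrow> nat \<Rightarrow> real) \<Rightarrow> real" where
  "sep K A = Min {Max {\<bar>A p1 q - A p2 q\<bar> + \<bar>A q p1 - A q p2\<bar> | q. q \<in> {1..K}}
                   | p1 p2. p1 \<in> {1..K} \<and> p2 \<in> {1..K} \<and> p1 \<noteq> p2}"

definition P_bar :: "'a measure \<Rightarrow> nat \<Rightarrow> (nat \<Rightarrow> nat \<Rightarrow> 'a \<Rightarrow> real) \<Rightarrow> (nat \<Rightarrow> nat) \<Rightarrow> nat \<Rightarrow> nat \<Rightarrow> real" where
  "P_bar M N X z p q = (\<integral>\<omega>. P_hat N (\<lambda>i j. X i j \<omega>) z p q \<partial>M)"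

definition delta_bar :: "'a measure \<Rightarrow> nat \<Rightarrow> nat \<Rightarrow> (nat \<Rightarrow> nat \<Rightarrow> 'a \<Rightarrow> real) \<Rightarrow> (nat \<Rightarrow> nat) \<Rightarrow> real" where
  "delta_bar M K N X z = sep K (P_bar M N X z)"

definition Zgam :: "nat \<Rightarrow> nat \<Rightarrow> real \<Rightarrow> (nat \<Rightarrow> nat) set" where
  "Zgam K N g = {z \<in> labels K N. \<forall>p\<in>{1..K}. real (Ncl N z p) / real N \<ge> g}"

definition Delta :: "nat \<Rightarrow> nat \<Rightarrow> (nat \<Rightarrow> nat) \<Rightarrow> (nat \<Rightarrow> nat) \<Rightarrow> real" where
  "Delta K N z z' = real K / (real N ^ 2 * (real K - 1)) *
     real (card {(i, j). i \<in> {1..N} \<and> j \<in> {1..N} \<and> z i = z j \<and> z' i \<noteq> z' j})"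

definition KMat :: "nat \<Rightarrow> (nat \<Rightarrow> nat \<Rightarrow> real) set" where
  "KMat K = {A. \<forall>p q. \<not> (p \<in> {1..K} \<and> q \<in> {1..K}) \<longrightarrow> A p q = 0}"

definition restrictK :: "nat \<Rightarrow> (nat \<Rightarrow> nat \<Rightarrow> real) \<Rightarrow> (nat \<Rightarrow> nat \<Rightarrow> real)" where
  "restrictK K A = (\<lambda>p q. if p \<in> {1..K} \<and> q \<in> {1..K} then A p q else 0)"

definition is_mat_norm :: "nat \<Rightarrow> ((nat \<Rightarrow> nat \<Rightarrow> real) \<Rightarrow> real) \<Rightarrow> bool" where
  "is_mat_norm K nrm \<longleftrightarrow>
     (\<forall>A\<in>KMat K. nrm A \<ge> 0 \<and> (nrm A = 0 \<longleftrightarrow> A = (\<lambda>_ _. 0))) \<and>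
     (\<forall>A\<in>KMat K. \<forall>c. nrm (\<lambda>p q. c * A p q) = \<bar>c\<bar> * nrm A) \<and>
     (\<forall>A\<in>KMat K. \<forall>B\<in>KMat K. nrm (\<lambda>p q. A p q + B p q) \<le> nrm A + nrm B)"

end

theory Submission
  imports Defs
begin

text \<open>
  Write X = A + D, where A i j = Pstar (zstar i) (zstar j) is the mean matrix and D the centred
  noise. All statistics entering L_hat are linear in the matrix, and their noise parts are
  bilinear forms of D against pairs of test vectors: sign vectors scaled by 1/N, or signed
  normalised indicators of a class of a gamma-balanced labelling. For one pair Hoeffding's
  inequality gives the tail exp (-2 t^2 (gamma N)^2), and there are at most (4 K^2)^(2N) pairs,
  so for t of order N^(-1/2) the noise is small on all balanced labellings at once, outside an
  event of probability exp (-N). There L_hat X and L_hat A differ by at most 4 K t on balanced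
  labellings. Since L_hat A vanishes at zstar and zhat minimises L_hat X, L_hat A is at most
  8 K t at zhat; and if the rows of P_hat A at zhat are delta-separated, every pair i, j in a
  common true class but in different estimated classes contributes delta to it, which bounds
  Delta by 32 K t / delta. Borel-Cantelli turns the exp (-N) bound into almost sure
  convergence, and the same event bounds P_hat - P_bar entrywise by t.

  Only independence, boundedness and the means of the entries are used.
\<close>

section \<open>Hoeffding's inequality for weighted sums\<close>

lemma (in prob_space) Hoeffding_weighted_sum:
  fixes Y :: "'b \<Rightarrow> 'a \<Rightarrow> real" and c :: "'b \<Rightarrow> real"
  assumes fin: "finite I" and indep: "indep_vars (\<lambda>_. borel) Y I"
    and range: "\<And>k \<omega>. k \<in> I \<Longrightarrow> \<omega> \<in> space M \<Longrightarrow> 0 \<le> Y k \<omega> \<and> Y k \<omega> \<le> 1"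
    and t: "t > 0" and V: "(\<Sum>k\<in>I. (c k)\<^sup>2) \<le> V"
  shows "prob {\<omega>\<in>space M. t \<le> (\<Sum>k\<in>I. c k * (Y k \<omega> - expectation (Y k)))} \<le> exp (-2 * t\<^sup>2 / V)"
proof (cases "(\<Sum>k\<in>I. (c k)\<^sup>2) = 0")
  case True
  then have "\<forall>k\<in>I. c k = 0" using fin by (simp add: sum_nonneg_eq_0_iff)
  then have "{\<omega>\<in>space M. t \<le> (\<Sum>k\<in>I. c k * (Y k \<omega> - expectation (Y k)))} = {}"
    using t by auto
  then show ?thesis by (metis measure_empty exp_ge_zero)
next
  case False
  then have pos: "(\<Sum>k\<in>I. (c k)\<^sup>2) > 0" by (simp add: order_less_le sum_nonneg)
  interpret Hoeffding_ineq M I "\<lambda>k \<omega>. c k * Y k \<omega>" "\<lambda>k. min 0 (c k)" "\<lambda>k. max 0 (c k)"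
      "\<Sum>k\<in>I. expectation (\<lambda>\<omega>. c k * Y k \<omega>)"
  proof unfold_locales
    show "indep_vars (\<lambda>_. borel) (\<lambda>k \<omega>. c k * Y k \<omega>) I"
      by (rule indep_vars_compose2[OF indep]) auto
    fix k assume k: "k \<in> I"
    show "AE \<omega> in M. c k * Y k \<omega> \<in> {min 0 (c k)..max 0 (c k)}"
    proof (rule AE_I2)
      fix \<omega> assume "\<omega> \<in> space M"
      with range[OF k] show "c k * Y k \<omega> \<in> {min 0 (c k)..max 0 (c k)}"
        by (cases "c k \<ge> 0") (auto simp: mult_le_cancel_left1 mult_nonneg_nonneg mult_nonpos_nonneg
              intro: mult_left_le mult_left_mono_neg order_trans)
    qed
  qed (fact fin)
  have width: "(\<Sum>k\<in>I. (max 0 (c k) - min 0 (c k))\<^sup>2) = (\<Sum>k\<in>I. (c k)\<^sup>2)"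
    by (intro sum.cong) (auto simp: max_def min_def)
  have "prob {\<omega>\<in>space M. t \<le> (\<Sum>k\<in>I. c k * (Y k \<omega> - expectation (Y k)))}
      = prob {\<omega>\<in>space M. (\<Sum>k\<in>I. c k * Y k \<omega>) \<ge> (\<Sum>k\<in>I. expectation (\<lambda>\<omega>. c k * Y k \<omega>)) + t}"
    by (simp add: right_diff_distrib sum_subtractf le_diff_eq add.commute)
  also have "\<dots> \<le> exp (-2 * t\<^sup>2 / (\<Sum>k\<in>I. (c k)\<^sup>2))"
    using Hoeffding_ineq_ge[of t] t pos width by simp
  also have "\<dots> \<le> exp (-2 * t\<^sup>2 / V)"
    using pos V t by (simp add: divide_left_mono)
  finally show ?thesis .
qed

section \<open>Class averages as weighted sums\<close>

lemma mu_hat_diff: "mu_hat N (\<lambda>i j. A i j - B i j) z i q = mu_hat N A z i q - mu_hat N B z i q"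
  unfolding mu_hat_def by (simp add: sum_subtractf diff_divide_distrib)

lemma nu_hat_diff: "nu_hat N (\<lambda>i j. A i j - B i j) z p j = nu_hat N A z p j - nu_hat N B z p j"
  unfolding nu_hat_def by (simp add: sum_subtractf diff_divide_distrib)

lemma P_hat_diff: "P_hat N (\<lambda>i j. A i j - B i j) z p q = P_hat N A z p q - P_hat N B z p q"
  unfolding P_hat_def by (simp add: sum_subtractf diff_divide_distrib)

lemma finite_Icl [simp]: "finite (Icl N z q)"
  unfolding Icl_def by simp

lemma Icl_subset: "Icl N z q \<subseteq> {1..N}"
  unfolding Icl_def by blast

lemma sum_Icl_label: "(\<Sum>j\<in>Icl N z q. f (z j)) = real (Ncl N z q) * f q"
  by (simp add: Icl_def Ncl_def)

lemma Ncl_label_nonzero: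
  assumes "i \<in> {1..N}"
  shows "Ncl N z (z i) \<noteq> 0"
proof -
  have "i \<in> Icl N z (z i)" using assms by (simp add: Icl_def)
  then show ?thesis unfolding Ncl_def by (auto simp: card_0_eq)
qed

definition class_weight :: "nat \<Rightarrow> (nat \<Rightarrow> nat) \<Rightarrow> nat \<Rightarrow> nat \<Rightarrow> real" where
  "class_weight N z q j = (if j \<in> Icl N z q then 1 / real (Ncl N z q) else 0)"

lemma sum_class_weight_mult:
  "(\<Sum>j\<in>{1..N}. class_weight N z q j * f j) = (\<Sum>j\<in>Icl N z q. f j) / real (Ncl N z q)"
proof -
  have "(\<Sum>j\<in>{1..N}. class_weight N z q j * f j)
      = (\<Sum>j\<in>{1..N}. if j \<in> Icl N z q then f j / real (Ncl N z q) else 0)"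
    by (intro sum.cong) (auto simp: class_weight_def)
  also have "\<dots> = (\<Sum>j\<in>{1..N} \<inter> Icl N z q. f j / real (Ncl N z q))"
    by (rule sum.inter_restrict[symmetric]) simp
  also have "{1..N} \<inter> Icl N z q = Icl N z q"
    using Icl_subset by blast
  finally show ?thesis by (simp add: sum_divide_distrib)
qed

definition bilinear_form :: "nat \<Rightarrow> (nat \<Rightarrow> real) \<Rightarrow> (nat \<Rightarrow> real) \<Rightarrow> (nat \<Rightarrow> nat \<Rightarrow> real) \<Rightarrow> real" where
  "bilinear_form N \<alpha> \<beta> D = (\<Sum>i\<in>{1..N}. \<Sum>j\<in>{1..N}. \<alpha> i * \<beta> j * D i j)"

lemma mu_hat_eq_sum: "mu_hat N D z i q = (\<Sum>j\<in>{1..N}. class_weight N z q j * D i j)"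
  unfolding mu_hat_def sum_class_weight_mult by simp

lemma nu_hat_eq_sum: "nu_hat N D z p j = (\<Sum>i\<in>{1..N}. class_weight N z p i * D i j)"
  unfolding nu_hat_def sum_class_weight_mult by simp

lemma P_hat_eq_sum_mu_hat: "P_hat N D z p q = (\<Sum>i\<in>{1..N}. class_weight N z p i * mu_hat N D z i q)"
  unfolding P_hat_def mu_hat_def sum_class_weight_mult by (simp add: sum_divide_distrib ac_simps)

lemma bilinear_form_class_weight_right:
  "bilinear_form N \<alpha> (class_weight N z q) D = (\<Sum>i\<in>{1..N}. \<alpha> i * mu_hat N D z i q)"
  by (simp add: bilinear_form_def mu_hat_eq_sum sum_distrib_left mult_ac)

lemma bilinear_form_class_weight_left:
  "bilinear_form N (class_weight N z p) \<beta> D = (\<Sum>j\<in>{1..N}. \<beta> j * nu_hat N D z p j)"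
  unfolding bilinear_form_def nu_hat_eq_sum sum_distrib_left
  by (subst sum.swap) (simp add: mult_ac)

lemma P_hat_eq_bilinear_form: "P_hat N D z p q = bilinear_form N (class_weight N z p) (class_weight N z q) D"
  by (simp add: P_hat_eq_sum_mu_hat bilinear_form_class_weight_right)

lemma sum_class_weight_sq: "(\<Sum>j\<in>{1..N}. (class_weight N z q j)\<^sup>2) = 1 / real (Ncl N z q)"
proof -
  have "(\<Sum>j\<in>{1..N}. (class_weight N z q j)\<^sup>2) = (\<Sum>j\<in>Icl N z q. class_weight N z q j) / real (Ncl N z q)"
    unfolding power2_eq_square by (rule sum_class_weight_mult)
  also have "\<dots> = (\<Sum>j\<in>Icl N z q. 1 / real (Ncl N z q)) / real (Ncl N z q)"
    by (simp add: class_weight_def)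
  finally show ?thesis by (simp add: Ncl_def)
qed

section \<open>The loss and the misclassification rate\<close>

definition node_loss :: "nat \<Rightarrow> nat \<Rightarrow> (nat \<Rightarrow> nat \<Rightarrow> real) \<Rightarrow> (nat \<Rightarrow> nat) \<Rightarrow> nat \<Rightarrow> real" where
  "node_loss K N X z i = (\<Sum>q\<in>{1..K}.
      \<bar>mu_hat N X z i q - P_hat N X z (z i) q\<bar> + \<bar>nu_hat N X z q i - P_hat N X z q (z i)\<bar>)"

lemma L_hat_eq_sum_node_loss: "L_hat K N X z = (\<Sum>i\<in>{1..N}. node_loss K N X z i) / real N"
  unfolding L_hat_def node_loss_def by simp

lemma node_loss_nonneg: "0 \<le> node_loss K N X z i"
  unfolding node_loss_def by (intro sum_nonneg) simp

lemma L_hat_nonneg: "0 \<le> L_hat K N X z"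
  unfolding L_hat_eq_sum_node_loss by (intro divide_nonneg_nonneg sum_nonneg node_loss_nonneg) simp

lemma L_hat_block_constant_eq_0: "L_hat K N (\<lambda>i j. B (zs i) (zs j)) zs = 0"
proof -
  let ?A = "\<lambda>i j. B (zs i) (zs j)"
  have block_sum: "(\<Sum>i\<in>Icl N zs p. \<Sum>j\<in>Icl N zs q. ?A i j) = real (Ncl N zs p) * real (Ncl N zs q) * B p q"
    for p q
  proof -
    have "(\<Sum>i\<in>Icl N zs p. \<Sum>j\<in>Icl N zs q. ?A i j) = (\<Sum>i\<in>Icl N zs p. real (Ncl N zs q) * B (zs i) q)"
      by (intro sum.cong refl sum_Icl_label)
    also have "\<dots> = real (Ncl N zs p) * (real (Ncl N zs q) * B p q)"
      by (rule sum_Icl_label)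
    finally show ?thesis by simp
  qed
  have "node_loss K N ?A zs i = 0" if "i \<in> {1..N}" for i
  proof -
    have nz: "Ncl N zs (zs i) \<noteq> 0" using Ncl_label_nonzero[OF that] .
    have "mu_hat N ?A zs i q = P_hat N ?A zs (zs i) q" for q
      using nz by (simp add: mu_hat_def P_hat_def block_sum sum_Icl_label[where f="\<lambda>b. B (zs i) b"])
    moreover have "nu_hat N ?A zs q i = P_hat N ?A zs q (zs i)" for q
      using nz by (simp add: nu_hat_def P_hat_def block_sum sum_Icl_label[where f="\<lambda>a. B a (zs i)"])
    ultimately show ?thesis unfolding node_loss_def by simp
  qed
  then show ?thesis unfolding L_hat_eq_sum_node_loss by simp
qed

lemma sep_le_sum:
  assumes "p1 \<in> {1..K}" "p2 \<in> {1..K}" "p1 \<noteq> p2"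
  shows "sep K A \<le> (\<Sum>q\<in>{1..K}. \<bar>A p1 q - A p2 q\<bar> + \<bar>A q p1 - A q p2\<bar>)"
proof -
  let ?f = "\<lambda>p1 p2 q. \<bar>A p1 q - A p2 q\<bar> + \<bar>A q p1 - A q p2\<bar>"
  have "finite {Max {?f p1 p2 q | q. q \<in> {1..K}} | p1 p2. p1 \<in> {1..K} \<and> p2 \<in> {1..K} \<and> p1 \<noteq> p2}"
    by (rule finite_subset[where B="(\<lambda>(p1, p2). Max {?f p1 p2 q | q. q \<in> {1..K}}) ` ({1..K} \<times> {1..K})"])
      auto
  then have "sep K A \<le> Max {?f p1 p2 q | q. q \<in> {1..K}}"
    unfolding sep_def by (rule Min_le) (use assms in blast)
  also have "{?f p1 p2 q | q. q \<in> {1..K}} = ?f p1 p2 ` {1..K}"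
    by blast
  also have "Max \<dots> \<le> (\<Sum>q\<in>{1..K}. ?f p1 p2 q)"
    using assms by (subst Max_le_iff) (auto intro!: member_le_sum)
  finally show ?thesis .
qed

text \<open>Rows i and j of a matrix that is block constant along zs coincide when zs i = zs j, so
  they have the same row and column means, and the triangle inequality through them bounds the
  distance between rows z i and z j of P_hat.\<close>
lemma sep_le_node_loss_add:
  fixes B :: "nat \<Rightarrow> nat \<Rightarrow> real" and zs :: "nat \<Rightarrow> nat"
  defines "A \<equiv> \<lambda>i j. B (zs i) (zs j)"
  assumes "z i \<in> {1..K}" "z j \<in> {1..K}" "z i \<noteq> z j" "zs i = zs j"
  shows "sep K (P_hat N A z) \<le> node_loss K N A z i + node_loss K N A z j"
proof -
  let ?P = "P_hat N A z"
  have "sep K ?P \<le> (\<Sum>q\<in>{1..K}. \<bar>?P (z i) q - ?P (z j) q\<bar> + \<bar>?P q (z i) - ?P q (z j)\<bar>)"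
    using assms by (intro sep_le_sum) auto
  also have "\<dots> \<le> (\<Sum>q\<in>{1..K}.
      (\<bar>mu_hat N A z i q - ?P (z i) q\<bar> + \<bar>nu_hat N A z q i - ?P q (z i)\<bar>)
    + (\<bar>mu_hat N A z j q - ?P (z j) q\<bar> + \<bar>nu_hat N A z q j - ?P q (z j)\<bar>))"
  proof (intro sum_mono)
    fix q
    have "mu_hat N A z i q = mu_hat N A z j q" "nu_hat N A z q i = nu_hat N A z q j"
      using \<open>zs i = zs j\<close> by (simp_all add: A_def mu_hat_def nu_hat_def)
    then show "\<bar>?P (z i) q - ?P (z j) q\<bar> + \<bar>?P q (z i) - ?P q (z j)\<bar>
      \<le> (\<bar>mu_hat N A z i q - ?P (z i) q\<bar> + \<bar>nu_hat N A z q i - ?P q (z i)\<bar>)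
        + (\<bar>mu_hat N A z j q - ?P (z j) q\<bar> + \<bar>nu_hat N A z q j - ?P q (z j)\<bar>)"
      by linarith
  qed
  also have "\<dots> = node_loss K N A z i + node_loss K N A z j"
    unfolding node_loss_def by (simp add: sum.distrib)
  finally show ?thesis .
qed

lemma Delta_nonneg: "K \<ge> 1 \<Longrightarrow> 0 \<le> Delta K N z z'"
  unfolding Delta_def by simp

lemma Delta_le_L_hat:
  fixes B :: "nat \<Rightarrow> nat \<Rightarrow> real" and zs :: "nat \<Rightarrow> nat"
  defines "A \<equiv> \<lambda>i j. B (zs i) (zs j)"
  assumes K: "K \<ge> 2" and N: "N \<ge> 1" and z: "z \<in> labels K N"
    and \<delta>: "0 < \<delta>" "\<delta> \<le> sep K (P_hat N A z)"
  shows "Delta K N zs z \<le> 4 * L_hat K N A z / \<delta>"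
proof -
  let ?g = "node_loss K N A z"
  define S where "S = {(i, j). i \<in> {1..N} \<and> j \<in> {1..N} \<and> zs i = zs j \<and> z i \<noteq> z j}"
  have S_subset: "S \<subseteq> {1..N} \<times> {1..N}" unfolding S_def by auto
  have "real (card S) * \<delta> = (\<Sum>(i, j)\<in>S. \<delta>)" by simp
  also have "\<dots> \<le> (\<Sum>(i, j)\<in>S. ?g i + ?g j)"
  proof (intro sum_mono, clarify)
    fix i j assume "(i, j) \<in> S"
    with z have "z i \<in> {1..K}" "z j \<in> {1..K}" "z i \<noteq> z j" "zs i = zs j"
      by (auto simp: S_def labels_def)
    then show "\<delta> \<le> ?g i + ?g j"
      using sep_le_node_loss_add[where B=B and zs=zs and z=z and K=K and N=N] \<delta>(2)
      unfolding A_def by fastforce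
  qed
  also have "\<dots> \<le> (\<Sum>(i, j)\<in>{1..N} \<times> {1..N}. ?g i + ?g j)"
    by (intro sum_mono2 S_subset) (auto intro: add_nonneg_nonneg node_loss_nonneg)
  also have "\<dots> = 2 * real N * (\<Sum>i\<in>{1..N}. ?g i)"
    by (simp add: sum.cartesian_product[symmetric] sum.distrib sum.swap[of "\<lambda>i j. ?g j"]
        sum_distrib_left[symmetric])
  also have "\<dots> = 2 * (real N)\<^sup>2 * L_hat K N A z"
    using N by (simp add: L_hat_eq_sum_node_loss power2_eq_square)
  finally have card_S: "real (card S) * \<delta> \<le> 2 * (real N)\<^sup>2 * L_hat K N A z" .
  have "Delta K N zs z = real K / (real K - 1) * (real (card S) / (real N)\<^sup>2)"
    unfolding Delta_def S_def by simp
  also have "\<dots> \<le> 2 * (2 * L_hat K N A z / \<delta>)"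
  proof (intro mult_mono)
    show "real K / (real K - 1) \<le> 2" using K by (simp add: field_simps)
    show "real (card S) / (real N)\<^sup>2 \<le> 2 * L_hat K N A z / \<delta>"
      using card_S N \<delta>(1) by (simp add: field_simps)
  qed (use K L_hat_nonneg \<delta>(1) in auto)
  finally show ?thesis by simp
qed

definition small_deviation :: "nat \<Rightarrow> nat \<Rightarrow> real \<Rightarrow> (nat \<Rightarrow> nat \<Rightarrow> real) \<Rightarrow> (nat \<Rightarrow> nat) \<Rightarrow> bool" where
  "small_deviation K N t D z \<longleftrightarrow> (\<forall>q\<in>{1..K}.
      (\<Sum>i\<in>{1..N}. \<bar>mu_hat N D z i q\<bar>) \<le> real N * t \<and>
      (\<Sum>i\<in>{1..N}. \<bar>nu_hat N D z q i\<bar>) \<le> real N * t \<and>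
      (\<forall>p\<in>{1..K}. \<bar>P_hat N D z p q\<bar> \<le> t))"

lemma node_loss_diff_le:
  fixes A B :: "nat \<Rightarrow> nat \<Rightarrow> real"
  defines "D \<equiv> \<lambda>i j. A i j - B i j"
  shows "\<bar>node_loss K N A z i - node_loss K N B z i\<bar> \<le> (\<Sum>q\<in>{1..K}.
    \<bar>mu_hat N D z i q\<bar> + \<bar>nu_hat N D z q i\<bar> + (\<bar>P_hat N D z (z i) q\<bar> + \<bar>P_hat N D z q (z i)\<bar>))"
proof -
  have "\<bar>node_loss K N A z i - node_loss K N B z i\<bar> \<le> (\<Sum>q\<in>{1..K}.
      \<bar>(\<bar>mu_hat N A z i q - P_hat N A z (z i) q\<bar> + \<bar>nu_hat N A z q i - P_hat N A z q (z i)\<bar>)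
     - (\<bar>mu_hat N B z i q - P_hat N B z (z i) q\<bar> + \<bar>nu_hat N B z q i - P_hat N B z q (z i)\<bar>)\<bar>)"
    unfolding node_loss_def sum_subtractf[symmetric] by (rule sum_abs)
  also have "\<dots> \<le> (\<Sum>q\<in>{1..K}.
    \<bar>mu_hat N D z i q\<bar> + \<bar>nu_hat N D z q i\<bar> + (\<bar>P_hat N D z (z i) q\<bar> + \<bar>P_hat N D z q (z i)\<bar>))"
    unfolding D_def mu_hat_diff nu_hat_diff P_hat_diff by (intro sum_mono) linarith
  finally show ?thesis .
qed

lemma sum_deviation_terms_le:
  assumes z: "z \<in> labels K N" and dev: "small_deviation K N t D z"
  shows "(\<Sum>i\<in>{1..N}. \<Sum>q\<in>{1..K}.
    \<bar>mu_hat N D z i q\<bar> + \<bar>nu_hat N D z q i\<bar> + (\<bar>P_hat N D z (z i) q\<bar> + \<bar>P_hat N D z q (z i)\<bar>))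
    \<le> 4 * real K * real N * t"
proof -
  let ?mu = "\<lambda>i q. \<bar>mu_hat N D z i q\<bar>" and ?nu = "\<lambda>i q. \<bar>nu_hat N D z q i\<bar>"
  let ?P = "\<lambda>i q. \<bar>P_hat N D z (z i) q\<bar> + \<bar>P_hat N D z q (z i)\<bar>"
  have dev: "(\<Sum>i\<in>{1..N}. ?mu i q) \<le> real N * t" "(\<Sum>i\<in>{1..N}. ?nu i q) \<le> real N * t"
    "\<bar>P_hat N D z p q\<bar> \<le> t" if "p \<in> {1..K}" "q \<in> {1..K}" for p q
    using dev that unfolding small_deviation_def by auto
  have zi: "z i \<in> {1..K}" if "i \<in> {1..N}" for i
    using z that by (auto simp: labels_def)
  have "(\<Sum>i\<in>{1..N}. \<Sum>q\<in>{1..K}. ?mu i q) = (\<Sum>q\<in>{1..K}. \<Sum>i\<in>{1..N}. ?mu i q)"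
    "(\<Sum>i\<in>{1..N}. \<Sum>q\<in>{1..K}. ?nu i q) = (\<Sum>q\<in>{1..K}. \<Sum>i\<in>{1..N}. ?nu i q)"
    by (rule sum.swap)+
  then have "(\<Sum>i\<in>{1..N}. \<Sum>q\<in>{1..K}. ?mu i q + ?nu i q + ?P i q)
      = (\<Sum>q\<in>{1..K}. \<Sum>i\<in>{1..N}. ?mu i q) + (\<Sum>q\<in>{1..K}. \<Sum>i\<in>{1..N}. ?nu i q)
        + (\<Sum>i\<in>{1..N}. \<Sum>q\<in>{1..K}. ?P i q)"
    by (simp only: sum.distrib)
  also have "\<dots> \<le> real K * (real N * t) + real K * (real N * t) + real N * (real K * (2 * t))"
  proof (intro add_mono)
    show "(\<Sum>q\<in>{1..K}. \<Sum>i\<in>{1..N}. ?mu i q) \<le> real K * (real N * t)"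
      using sum_bounded_above[of "{1..K}" "\<lambda>q. \<Sum>i\<in>{1..N}. ?mu i q" "real N * t"] dev(1) by simp
    show "(\<Sum>q\<in>{1..K}. \<Sum>i\<in>{1..N}. ?nu i q) \<le> real K * (real N * t)"
      using sum_bounded_above[of "{1..K}" "\<lambda>q. \<Sum>i\<in>{1..N}. ?nu i q" "real N * t"] dev(2) by simp
    have "(\<Sum>q\<in>{1..K}. ?P i q) \<le> real K * (2 * t)" if i: "i \<in> {1..N}" for i
    proof -
      have "?P i q \<le> 2 * t" if "q \<in> {1..K}" for q
        using dev(3)[OF zi[OF i] that] dev(3)[OF that zi[OF i]] by linarith
      then show ?thesis
        using sum_bounded_above[of "{1..K}" "?P i" "2 * t"] by simp
    qed
    then show "(\<Sum>i\<in>{1..N}. \<Sum>q\<in>{1..K}. ?P i q) \<le> real N * (real K * (2 * t))"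
      using sum_bounded_above[of "{1..N}" "\<lambda>i. \<Sum>q\<in>{1..K}. ?P i q"] by simp
  qed
  finally show ?thesis by (simp add: algebra_simps)
qed

lemma L_hat_diff_le:
  assumes N: "N \<ge> 1" and z: "z \<in> labels K N"
    and dev: "small_deviation K N t (\<lambda>i j. A i j - B i j) z"
  shows "\<bar>L_hat K N A z - L_hat K N B z\<bar> \<le> 4 * real K * t"
proof -
  have "\<bar>L_hat K N A z - L_hat K N B z\<bar>
      = \<bar>\<Sum>i\<in>{1..N}. node_loss K N A z i - node_loss K N B z i\<bar> / real N"
    by (simp add: L_hat_eq_sum_node_loss sum_subtractf diff_divide_distrib[symmetric] abs_divide)
  also have "\<dots> \<le> 4 * real K * real N * t / real N"
    by (intro divide_right_mono order_trans[OF sum_abs] order_trans[OF sum_mono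
          sum_deviation_terms_le[OF z dev]] node_loss_diff_le) simp
  also have "\<dots> = 4 * real K * t"
    using N by simp
  finally show ?thesis .
qed

lemma Delta_le_of_small_deviation:
  fixes B :: "nat \<Rightarrow> nat \<Rightarrow> real" and zs :: "nat \<Rightarrow> nat"
  defines "A \<equiv> \<lambda>i j. B (zs i) (zs j)"
  assumes K: "K \<ge> 2" and N: "N \<ge> 1" and zs: "zs \<in> labels K N" and z: "z \<in> labels K N"
    and min: "L_hat K N X z \<le> L_hat K N X zs"
    and dev: "small_deviation K N t (\<lambda>i j. X i j - A i j) z"
      "small_deviation K N t (\<lambda>i j. X i j - A i j) zs"
    and \<delta>: "0 < \<delta>" "\<delta> \<le> sep K (P_hat N A z)"
  shows "Delta K N zs z \<le> 32 * real K * t / \<delta>"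
proof -
  have "L_hat K N A z \<le> 8 * real K * t"
    using L_hat_diff_le[OF N z dev(1)] L_hat_diff_le[OF N zs dev(2)] min
      L_hat_block_constant_eq_0[of K N B zs] unfolding A_def by linarith
  then have "4 * L_hat K N A z / \<delta> \<le> 32 * real K * t / \<delta>"
    using \<delta>(1) by (intro divide_right_mono) (auto simp: algebra_simps)
  with Delta_le_L_hat[where B=B and zs=zs, OF K N z \<delta>[unfolded A_def]] show ?thesis
    unfolding A_def by linarith
qed

section \<open>Test vectors\<close>

lemma finite_labels: "finite (labels K N)"
  by (simp add: labels_def finite_PiE)

lemma Zgam_subset_labels: "Zgam K N \<gamma> \<subseteq> labels K N"
  by (auto simp: Zgam_def)

lemma Zgam_antimono: "\<gamma>' \<le> \<gamma> \<Longrightarrow> Zgam K N \<gamma> \<subseteq> Zgam K N \<gamma>'"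
  unfolding Zgam_def by force

lemma finite_Zgam: "finite (Zgam K N \<gamma>)"
  using finite_subset[OF Zgam_subset_labels finite_labels] .

definition signs :: "nat \<Rightarrow> (nat \<Rightarrow> real) set" where
  "signs N = PiE {1..N} (\<lambda>_. {-1, 1})"

definition test_vectors :: "nat \<Rightarrow> nat \<Rightarrow> real \<Rightarrow> (nat \<Rightarrow> real) set" where
  "test_vectors K N \<gamma> = (\<lambda>s i. s i / real N) ` signs N
     \<union> (\<lambda>(z, q, \<sigma>) i. \<sigma> * class_weight N z q i) ` (Zgam K N \<gamma> \<times> {1..K} \<times> {-1, 1})"

lemma finite_test_vectors: "finite (test_vectors K N \<gamma>)"
  by (simp add: test_vectors_def signs_def finite_PiE finite_Zgam)

lemma card_test_vectors_le_sum: "card (test_vectors K N \<gamma>) \<le> 2 ^ N + K ^ N * (K * 2)"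
proof -
  have "card (Zgam K N \<gamma>) \<le> K ^ N"
    using card_mono[OF finite_labels Zgam_subset_labels] by (simp add: labels_def card_PiE)
  moreover have "card (Zgam K N \<gamma> \<times> {1..K} \<times> {-1, 1 :: real}) = card (Zgam K N \<gamma>) * (K * 2)"
    by (simp add: card_cartesian_product)
  ultimately have "card (Zgam K N \<gamma> \<times> {1..K} \<times> {-1, 1 :: real}) \<le> K ^ N * (K * 2)"
    by (metis mult_le_mono1)
  moreover have "card (signs N) = 2 ^ N"
    by (simp add: signs_def card_PiE numeral_2_eq_2)
  ultimately show ?thesis
    unfolding test_vectors_def
    by (intro order_trans[OF card_Un_le] add_mono order_trans[OF card_image_le])
      (simp_all add: signs_def finite_PiE finite_Zgam)
qed

lemma card_test_vectors_le:
  assumes K: "K \<ge> 1" and N: "N \<ge> 1"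
  shows "real (card (test_vectors K N \<gamma>)) \<le> (4 * (real K)\<^sup>2) ^ N"
proof -
  have "real (card (test_vectors K N \<gamma>)) \<le> real (2 ^ N + K ^ N * (K * 2))"
    using card_test_vectors_le_sum by (simp only: of_nat_le_iff)
  also have "\<dots> = 2 ^ N + real K ^ N * (real K * 2)"
    by simp
  also have "\<dots> \<le> (2 * (real K)\<^sup>2) ^ N + (2 * (real K)\<^sup>2) ^ N"
  proof (intro add_mono)
    show "(2::real) ^ N \<le> (2 * (real K)\<^sup>2) ^ N"
      using K by (intro power_mono) (auto simp: one_le_power)
    have "real K ^ N * (real K * 2) = 2 * real K ^ (N + 1)" by simp
    also have "\<dots> \<le> 2 ^ N * real K ^ (2 * N)"
      using K N by (intro mult_mono power_increasing) (auto simp: self_le_power)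
    also have "\<dots> = (2 * (real K)\<^sup>2) ^ N" by (simp add: power_mult power_mult_distrib)
    finally show "real K ^ N * (real K * 2) \<le> (2 * (real K)\<^sup>2) ^ N" .
  qed
  also have "\<dots> = 2 * (2 * (real K)\<^sup>2) ^ N"
    by simp
  also have "\<dots> \<le> 2 ^ N * (2 * (real K)\<^sup>2) ^ N"
    using N by (intro mult_right_mono) (simp_all add: self_le_power)
  also have "\<dots> = (2 * (2 * (real K)\<^sup>2)) ^ N"
    by (rule power_mult_distrib[symmetric])
  finally show ?thesis by simp
qed

lemma sign_in_test_vectors: "s \<in> signs N \<Longrightarrow> (\<lambda>i. s i / real N) \<in> test_vectors K N \<gamma>"
  unfolding test_vectors_def by blast

lemma class_weight_in_test_vectors:
  "z \<in> Zgam K N \<gamma> \<Longrightarrow> q \<in> {1..K} \<Longrightarrow> \<sigma> \<in> {-1, 1} \<Longrightarrow>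
    (\<lambda>i. \<sigma> * class_weight N z q i) \<in> test_vectors K N \<gamma>"
  unfolding test_vectors_def by (rule UnI2, rule image_eqI[where x="(z, q, \<sigma>)"]) auto

lemma sum_sq_test_vector_le:
  assumes v: "v \<in> test_vectors K N \<gamma>" and \<gamma>: "0 < \<gamma>" "\<gamma> \<le> 1" and N: "N \<ge> 1"
  shows "(\<Sum>i\<in>{1..N}. (v i)\<^sup>2) \<le> 1 / (\<gamma> * real N)"
  using v unfolding test_vectors_def
proof (elim UnE imageE)
  fix s assume s: "s \<in> signs N" and v: "v = (\<lambda>i. s i / real N)"
  have "(\<Sum>i\<in>{1..N}. (v i)\<^sup>2) = (\<Sum>i\<in>{1..N}. 1 / (real N)\<^sup>2)"
  proof (intro sum.cong refl)
    fix i assume "i \<in> {1..N}"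
    then have "s i \<in> {-1, 1}" using s by (auto simp: signs_def PiE_iff)
    then show "(v i)\<^sup>2 = 1 / (real N)\<^sup>2" by (auto simp: v power_divide)
  qed
  also have "\<dots> = 1 / real N" by (simp add: power2_eq_square)
  also have "\<dots> \<le> 1 / (\<gamma> * real N)"
    using \<gamma> N by (intro divide_left_mono) (auto simp: mult_le_cancel_right1)
  finally show ?thesis .
next
  fix x assume x: "x \<in> Zgam K N \<gamma> \<times> {1..K} \<times> {-1, 1}"
    and v: "v = (case x of (z, q, \<sigma>) \<Rightarrow> \<lambda>i. \<sigma> * class_weight N z q i)"
  obtain z q \<sigma> where x_eq: "x = (z, q, \<sigma>)"
    by (cases x) auto
  have z: "z \<in> Zgam K N \<gamma>" and q: "q \<in> {1..K}" and \<sigma>: "\<sigma> \<in> {-1, 1}"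
    using x unfolding x_eq by simp_all
  have v: "v = (\<lambda>i. \<sigma> * class_weight N z q i)"
    using v unfolding x_eq by simp
  have "\<gamma> * real N \<le> real (Ncl N z q)"
    using z q N by (auto simp: Zgam_def field_simps)
  moreover have "(\<Sum>i\<in>{1..N}. (v i)\<^sup>2) = 1 / real (Ncl N z q)"
    using \<sigma> sum_class_weight_sq[of N z q] by (auto simp: v power_mult_distrib)
  ultimately show ?thesis
    using \<gamma> N by (simp add: frac_le)
qed

lemma bilinear_form_scale_left: "bilinear_form N (\<lambda>i. c * \<alpha> i) \<beta> D = c * bilinear_form N \<alpha> \<beta> D"
  by (simp add: bilinear_form_def sum_distrib_left mult_ac)

lemma ex_sign_sum_eq_sum_abs:
  "\<exists>s\<in>signs N. (\<Sum>i\<in>{1..N}. s i / real N * f i) = (\<Sum>i\<in>{1..N}. \<bar>f i\<bar>) / real N"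
proof
  let ?s = "\<lambda>i\<in>{1..N}. if 0 \<le> f i then 1 else -1 :: real"
  show "?s \<in> signs N" by (auto simp: signs_def)
  show "(\<Sum>i\<in>{1..N}. ?s i / real N * f i) = (\<Sum>i\<in>{1..N}. \<bar>f i\<bar>) / real N"
    unfolding sum_divide_distrib by (intro sum.cong) auto
qed

lemma small_deviation_if_bilinear_form_less:
  assumes z: "z \<in> Zgam K N \<gamma>" and N: "N \<ge> 1"
    and small: "\<forall>\<alpha>\<in>test_vectors K N \<gamma>. \<forall>\<beta>\<in>test_vectors K N \<gamma>. bilinear_form N \<alpha> \<beta> D < t"
  shows "small_deviation K N t D z"
  unfolding small_deviation_def
proof (intro ballI conjI)
  fix q assume q: "q \<in> {1..K}"
  have w: "class_weight N z q \<in> test_vectors K N \<gamma>"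
    using class_weight_in_test_vectors[OF z q, of 1] by simp
  obtain s where "s \<in> signs N"
    and s: "(\<Sum>i\<in>{1..N}. s i / real N * mu_hat N D z i q) = (\<Sum>i\<in>{1..N}. \<bar>mu_hat N D z i q\<bar>) / real N"
    using ex_sign_sum_eq_sum_abs[where f="\<lambda>i. mu_hat N D z i q"] by blast
  then have "bilinear_form N (\<lambda>i. s i / real N) (class_weight N z q) D < t"
    using small w sign_in_test_vectors by blast
  then have "(\<Sum>i\<in>{1..N}. \<bar>mu_hat N D z i q\<bar>) / real N < t"
    using s by (simp add: bilinear_form_class_weight_right)
  then show "(\<Sum>i\<in>{1..N}. \<bar>mu_hat N D z i q\<bar>) \<le> real N * t"
    using N by (simp add: pos_divide_less_eq) (metis less_imp_le mult.commute)
  obtain s where "s \<in> signs N"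
    and s: "(\<Sum>j\<in>{1..N}. s j / real N * nu_hat N D z q j) = (\<Sum>j\<in>{1..N}. \<bar>nu_hat N D z q j\<bar>) / real N"
    using ex_sign_sum_eq_sum_abs[where f="nu_hat N D z q"] by blast
  then have "bilinear_form N (class_weight N z q) (\<lambda>j. s j / real N) D < t"
    using small w sign_in_test_vectors by blast
  then have "(\<Sum>j\<in>{1..N}. \<bar>nu_hat N D z q j\<bar>) / real N < t"
    using s by (simp add: bilinear_form_class_weight_left)
  then show "(\<Sum>j\<in>{1..N}. \<bar>nu_hat N D z q j\<bar>) \<le> real N * t"
    using N by (simp add: pos_divide_less_eq) (metis less_imp_le mult.commute)
next
  fix q p assume q: "q \<in> {1..K}" and p: "p \<in> {1..K}"
  have "\<sigma> * P_hat N D z p q < t" if "\<sigma> \<in> {-1, 1}" for \<sigma>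
  proof -
    have "bilinear_form N (\<lambda>i. \<sigma> * class_weight N z p i) (class_weight N z q) D < t"
      using small class_weight_in_test_vectors[OF z p that]
        class_weight_in_test_vectors[OF z q, of 1] by simp
    then show ?thesis by (simp add: bilinear_form_scale_left P_hat_eq_bilinear_form)
  qed
  from this[of 1] this[of "-1"] show "\<bar>P_hat N D z p q\<bar> \<le> t" by auto
qed

section \<open>Norms of K x K matrices\<close>

definition unit_matrix :: "nat \<Rightarrow> nat \<Rightarrow> nat \<Rightarrow> nat \<Rightarrow> real" where
  "unit_matrix p q a b = of_bool (a = p \<and> b = q)"

lemma KMat_sum: "(\<And>x. x \<in> S \<Longrightarrow> F x \<in> KMat K) \<Longrightarrow> (\<lambda>a b. \<Sum>x\<in>S. F x a b) \<in> KMat K"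
  unfolding KMat_def by (auto intro: sum.neutral)

lemma mat_norm_nonneg: "is_mat_norm K nrm \<Longrightarrow> A \<in> KMat K \<Longrightarrow> 0 \<le> nrm A"
  unfolding is_mat_norm_def by blast

lemma mat_norm_sum_le:
  assumes nrm: "is_mat_norm K nrm" and "finite S" and "\<And>x. x \<in> S \<Longrightarrow> F x \<in> KMat K"
  shows "nrm (\<lambda>a b. \<Sum>x\<in>S. F x a b) \<le> (\<Sum>x\<in>S. nrm (F x))"
  using assms(2,3)
proof (induction S rule: finite_induct)
  case empty
  have "(\<lambda>a b. 0::real) \<in> KMat K" by (simp add: KMat_def)
  with nrm have "nrm (\<lambda>a b. 0) = 0" unfolding is_mat_norm_def by blast
  then show ?case by simp
next
  case (insert x S)
  have triangle: "nrm (\<lambda>p q. A p q + B p q) \<le> nrm A + nrm B" if "A \<in> KMat K" "B \<in> KMat K" for A B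
    using nrm that unfolding is_mat_norm_def by blast
  have "F x \<in> KMat K" "(\<lambda>a b. \<Sum>y\<in>S. F y a b) \<in> KMat K"
    using insert by (auto intro: KMat_sum)
  from triangle[OF this] insert show ?case by simp
qed

lemma restrictK_eq_sum_unit_matrix:
  "restrictK K D = (\<lambda>a b. \<Sum>(p, q)\<in>{1..K} \<times> {1..K}. D p q * unit_matrix p q a b)"
proof (intro ext)
  fix a b
  have "(\<Sum>(p, q)\<in>{1..K} \<times> {1..K}. D p q * unit_matrix p q a b)
      = (\<Sum>pq\<in>{1..K} \<times> {1..K}. if pq = (a, b) then D a b else 0)"
    by (intro sum.cong) (auto simp: unit_matrix_def)
  then show "restrictK K D a b = (\<Sum>(p, q)\<in>{1..K} \<times> {1..K}. D p q * unit_matrix p q a b)"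
    by (simp add: restrictK_def)
qed

lemma mat_norm_restrictK_le:
  assumes nrm: "is_mat_norm K nrm" and D: "\<And>p q. p \<in> {1..K} \<Longrightarrow> q \<in> {1..K} \<Longrightarrow> \<bar>D p q\<bar> \<le> \<tau>"
  shows "nrm (restrictK K D) \<le> (\<Sum>(p, q)\<in>{1..K} \<times> {1..K}. nrm (unit_matrix p q)) * \<tau>"
proof -
  have unit: "unit_matrix p q \<in> KMat K" if "p \<in> {1..K}" "q \<in> {1..K}" for p q
    using that by (auto simp: KMat_def unit_matrix_def)
  then have scaled: "(\<lambda>a b. c * unit_matrix p q a b) \<in> KMat K" if "p \<in> {1..K}" "q \<in> {1..K}" for c p q
    using that by (auto simp: KMat_def)
  have "nrm (restrictK K D) \<le> (\<Sum>(p, q)\<in>{1..K} \<times> {1..K}. nrm (\<lambda>a b. D p q * unit_matrix p q a b))"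
    unfolding restrictK_eq_sum_unit_matrix
    by (rule order_trans[OF mat_norm_sum_le[OF nrm]]) (auto simp: case_prod_unfold scaled)
  also have "\<dots> \<le> (\<Sum>(p, q)\<in>{1..K} \<times> {1..K}. nrm (unit_matrix p q) * \<tau>)"
  proof (intro sum_mono, clarify)
    fix p q assume pq: "p \<in> {1..K}" "q \<in> {1..K}"
    have "nrm (\<lambda>a b. D p q * unit_matrix p q a b) = \<bar>D p q\<bar> * nrm (unit_matrix p q)"
      using nrm unit[OF pq] unfolding is_mat_norm_def by blast
    also have "\<dots> \<le> \<tau> * nrm (unit_matrix p q)"
      by (intro mult_right_mono D pq mat_norm_nonneg[OF nrm unit[OF pq]])
    finally show "nrm (\<lambda>a b. D p q * unit_matrix p q a b) \<le> nrm (unit_matrix p q) * \<tau>"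
      by (simp add: mult.commute)
  qed
  finally show ?thesis
    by (simp add: sum_distrib_right case_prod_unfold)
qed

lemma restrictK_KMat: "restrictK K D \<in> KMat K"
  unfolding restrictK_def KMat_def by auto

section \<open>The random block model\<close>

locale block_model = prob_space M for M :: "'a measure" +
  fixes K :: nat and Pstar :: "nat \<Rightarrow> nat \<Rightarrow> real" and zstar :: "nat \<Rightarrow> nat \<Rightarrow> nat"
    and X :: "nat \<Rightarrow> nat \<Rightarrow> nat \<Rightarrow> 'a \<Rightarrow> real"
  assumes K2: "K \<ge> 2"
    and indep: "\<And>N. N \<ge> 1 \<Longrightarrow> indep_vars (\<lambda>_. borel) (\<lambda>(i, j). X N i j) ({1..N} \<times> {1..N})"
    and range01: "\<And>N i j \<omega>. N \<ge> 1 \<Longrightarrow> i \<in> {1..N} \<Longrightarrow> j \<in> {1..N} \<Longrightarrow> \<omega> \<in> space M \<Longrightarrow>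
        0 \<le> X N i j \<omega> \<and> X N i j \<omega> \<le> 1"
    and mean: "\<And>N i j. N \<ge> 1 \<Longrightarrow> i \<in> {1..N} \<Longrightarrow> j \<in> {1..N} \<Longrightarrow>
        (\<integral>\<omega>. X N i j \<omega> \<partial>M) = Pstar (zstar N i) (zstar N j)"
begin

definition mean_matrix :: "nat \<Rightarrow> nat \<Rightarrow> nat \<Rightarrow> real" where
  "mean_matrix N i j = Pstar (zstar N i) (zstar N j)"

definition noise :: "nat \<Rightarrow> 'a \<Rightarrow> nat \<Rightarrow> nat \<Rightarrow> real" where
  "noise N \<omega> i j = X N i j \<omega> - mean_matrix N i j"

lemma X_measurable: "N \<ge> 1 \<Longrightarrow> i \<in> {1..N} \<Longrightarrow> j \<in> {1..N} \<Longrightarrow> X N i j \<in> borel_measurable M"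
  using indep[of N] unfolding indep_vars_def by (auto dest!: bspec[of _ _ "(i, j)"])

lemma integrable_X: "N \<ge> 1 \<Longrightarrow> i \<in> {1..N} \<Longrightarrow> j \<in> {1..N} \<Longrightarrow> integrable M (X N i j)"
  by (rule integrable_const_bound[where B=1]) (use range01[of N i j] X_measurable[of N i j] in auto)

lemma integral_bilinear_form:
  assumes N: "N \<ge> 1"
  shows "(\<integral>\<omega>. bilinear_form N \<alpha> \<beta> (\<lambda>i j. X N i j \<omega>) \<partial>M) = bilinear_form N \<alpha> \<beta> (mean_matrix N)"
proof -
  have "(\<integral>\<omega>. bilinear_form N \<alpha> \<beta> (\<lambda>i j. X N i j \<omega>) \<partial>M)
      = (\<Sum>i\<in>{1..N}. \<integral>\<omega>. (\<Sum>j\<in>{1..N}. \<alpha> i * \<beta> j * X N i j \<omega>) \<partial>M)"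
    unfolding bilinear_form_def using N
    by (intro Bochner_Integration.integral_sum Bochner_Integration.integrable_sum
        integrable_mult_right integrable_X) auto
  also have "\<dots> = (\<Sum>i\<in>{1..N}. \<Sum>j\<in>{1..N}. \<alpha> i * \<beta> j * (\<integral>\<omega>. X N i j \<omega> \<partial>M))"
    using N by (intro sum.cong refl) (simp add: Bochner_Integration.integral_sum integrable_X)
  finally show ?thesis
    using N by (simp add: bilinear_form_def mean mean_matrix_def)
qed

lemma P_bar_eq_P_hat_mean_matrix: "N \<ge> 1 \<Longrightarrow> P_bar M N (X N) z = P_hat N (mean_matrix N) z"
  by (intro ext) (simp add: P_bar_def P_hat_eq_bilinear_form integral_bilinear_form)

lemma P_hat_error_eq_P_hat_noise:
  "N \<ge> 1 \<Longrightarrow> P_hat N (\<lambda>i j. X N i j \<omega>) z p q - P_bar M N (X N) z p q = P_hat N (noise N \<omega>) z p q"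
  by (simp add: P_bar_eq_P_hat_mean_matrix P_hat_diff[symmetric] noise_def[abs_def])

lemma prob_bilinear_form_noise_ge:
  assumes N: "N \<ge> 1" and t: "t > 0"
    and \<alpha>: "(\<Sum>i\<in>{1..N}. (\<alpha> i)\<^sup>2) \<le> v" and \<beta>: "(\<Sum>j\<in>{1..N}. (\<beta> j)\<^sup>2) \<le> v"
  shows "prob {\<omega>\<in>space M. t \<le> bilinear_form N \<alpha> \<beta> (noise N \<omega>)} \<le> exp (-2 * t\<^sup>2 / v\<^sup>2)"
proof -
  let ?c = "\<lambda>k. \<alpha> (fst k) * \<beta> (snd k)" and ?Y = "\<lambda>(i, j). X N i j"
  have "(\<Sum>k\<in>{1..N} \<times> {1..N}. (?c k)\<^sup>2) = (\<Sum>i\<in>{1..N}. (\<alpha> i)\<^sup>2) * (\<Sum>j\<in>{1..N}. (\<beta> j)\<^sup>2)"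
    by (simp add: sum.cartesian_product' sum_product power_mult_distrib)
  also have "\<dots> \<le> v\<^sup>2"
    unfolding power2_eq_square[of v] using \<alpha> \<beta> order_trans[OF sum_nonneg \<alpha>]
    by (intro mult_mono) (auto intro: sum_nonneg)
  finally have "prob {\<omega>\<in>space M. t \<le> (\<Sum>k\<in>{1..N} \<times> {1..N}. ?c k * (?Y k \<omega> - expectation (?Y k)))}
      \<le> exp (-2 * t\<^sup>2 / v\<^sup>2)"
    by (intro Hoeffding_weighted_sum indep[OF N] t) (use range01[OF N] in auto)
  moreover have "(\<Sum>k\<in>{1..N} \<times> {1..N}. ?c k * (?Y k \<omega> - expectation (?Y k))) = bilinear_form N \<alpha> \<beta> (noise N \<omega>)"
    for \<omega> unfolding bilinear_form_def sum.cartesian_product'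
    by (intro sum.cong refl) (auto simp: noise_def mean_matrix_def mean[OF N] mult.assoc)
  ultimately show ?thesis by simp
qed

definition deviation_event :: "nat \<Rightarrow> real \<Rightarrow> real \<Rightarrow> 'a set" where
  "deviation_event N \<gamma> t = (\<Union>(\<alpha>, \<beta>)\<in>test_vectors K N \<gamma> \<times> test_vectors K N \<gamma>.
      {\<omega>\<in>space M. t \<le> bilinear_form N \<alpha> \<beta> (noise N \<omega>)})"

lemma bilinear_form_noise_event_sets:
  assumes N: "N \<ge> 1"
  shows "{\<omega>\<in>space M. t \<le> bilinear_form N \<alpha> \<beta> (noise N \<omega>)} \<in> sets M"
proof -
  have [measurable]: "(\<lambda>\<omega>. bilinear_form N \<alpha> \<beta> (noise N \<omega>)) \<in> borel_measurable M"
    unfolding bilinear_form_def noise_def using X_measurable[OF N] by auto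
  show ?thesis by measurable
qed

lemma deviation_event_sets: "N \<ge> 1 \<Longrightarrow> deviation_event N \<gamma> t \<in> sets M"
  unfolding deviation_event_def
  by (intro sets.finite_UN) (auto simp: finite_test_vectors bilinear_form_noise_event_sets)

lemma prob_deviation_event_le:
  assumes N: "N \<ge> 1" and \<gamma>: "0 < \<gamma>" "\<gamma> \<le> 1" and t: "t > 0"
  shows "prob (deviation_event N \<gamma> t) \<le> (4 * (real K)\<^sup>2) ^ (2 * N) * exp (-2 * t\<^sup>2 * (\<gamma> * real N)\<^sup>2)"
proof -
  let ?V = "test_vectors K N \<gamma>" and ?e = "exp (-2 * t\<^sup>2 * (\<gamma> * real N)\<^sup>2)"
  have "prob (deviation_event N \<gamma> t)
      \<le> (\<Sum>p\<in>?V \<times> ?V. prob (case p of (\<alpha>, \<beta>) \<Rightarrow> {\<omega>\<in>space M. t \<le> bilinear_form N \<alpha> \<beta> (noise N \<omega>)}))"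
    unfolding deviation_event_def
    by (rule measure_UNION_le) (auto simp: finite_test_vectors intro: bilinear_form_noise_event_sets[OF N])
  also have "\<dots> = (\<Sum>(\<alpha>, \<beta>)\<in>?V \<times> ?V. prob {\<omega>\<in>space M. t \<le> bilinear_form N \<alpha> \<beta> (noise N \<omega>)})"
    by (simp only: prod.case_distrib)
  also have "\<dots> \<le> real (card (?V \<times> ?V)) * ?e"
  proof (rule sum_bounded_above, clarify)
    fix \<alpha> \<beta> assume "\<alpha> \<in> ?V" "\<beta> \<in> ?V"
    then have "prob {\<omega>\<in>space M. t \<le> bilinear_form N \<alpha> \<beta> (noise N \<omega>)} \<le> exp (-2 * t\<^sup>2 / (1 / (\<gamma> * real N))\<^sup>2)"
      by (intro prob_bilinear_form_noise_ge N t sum_sq_test_vector_le \<gamma>)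
    then show "prob {\<omega>\<in>space M. t \<le> bilinear_form N \<alpha> \<beta> (noise N \<omega>)} \<le> ?e"
      by (simp add: power_one_over)
  qed
  also have "\<dots> \<le> ((4 * (real K)\<^sup>2) ^ N)\<^sup>2 * ?e"
    using card_test_vectors_le[of K N \<gamma>] K2 N
    by (intro mult_right_mono) (auto simp: card_cartesian_product power2_eq_square intro: mult_mono)
  also have "((4 * (real K)\<^sup>2) ^ N)\<^sup>2 = (4 * (real K)\<^sup>2) ^ (2 * N)"
    by (metis power_mult mult.commute)
  finally show ?thesis .
qed

text \<open>The constant makes 2 t^2 (gamma N)^2 = (1 + 2 ln (4 K^2)) N, so that the union bound over
  the (4 K^2)^(2N) test pairs leaves exp (-N).\<close>
definition deviation_radius :: "real \<Rightarrow> nat \<Rightarrow> real" where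
  "deviation_radius \<gamma> N = sqrt ((1 + 2 * ln (4 * (real K)\<^sup>2)) / (2 * \<gamma>\<^sup>2)) / sqrt (real N)"

lemma ln_4K2_nonneg: "0 \<le> ln (4 * (real K)\<^sup>2)"
proof -
  have "1 \<le> (real K)\<^sup>2" using K2 by (intro one_le_power) simp
  then show ?thesis by simp
qed

lemma deviation_radius_pos: "\<gamma> \<noteq> 0 \<Longrightarrow> N \<ge> 1 \<Longrightarrow> deviation_radius \<gamma> N > 0"
  using ln_4K2_nonneg by (simp add: deviation_radius_def add_pos_nonneg)

lemma deviation_radius_tendsto_0: "deviation_radius \<gamma> \<longlonglongrightarrow> 0"
  unfolding deviation_radius_def
  by (intro tendsto_divide_0[OF tendsto_const] filterlim_at_top_imp_at_infinity
      filterlim_compose[OF sqrt_at_top filterlim_real_sequentially])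

lemma deviation_radius_le_powr:
  assumes "N \<ge> 1" "r \<le> 1 / 2"
  shows "deviation_radius \<gamma> N \<le> deviation_radius \<gamma> 1 * real N powr (- r)"
proof -
  have "deviation_radius \<gamma> N = deviation_radius \<gamma> 1 * real N powr (- (1 / 2))"
    using assms by (simp add: deviation_radius_def powr_minus_divide powr_half_sqrt)
  also have "\<dots> \<le> deviation_radius \<gamma> 1 * real N powr (- r)"
    using assms ln_4K2_nonneg by (intro mult_left_mono powr_mono) (auto simp: deviation_radius_def)
  finally show ?thesis .
qed

lemma prob_deviation_event_radius:
  assumes N: "N \<ge> 1" and \<gamma>: "0 < \<gamma>" "\<gamma> \<le> 1"
  shows "prob (deviation_event N \<gamma> (deviation_radius \<gamma> N)) \<le> exp (- real N)"
proof -
  define c where "c = ln (4 * (real K)\<^sup>2)"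
  have pos: "4 * (real K)\<^sup>2 > 0" using K2 by simp
  have "(deviation_radius \<gamma> N)\<^sup>2 = (1 + 2 * c) / (2 * \<gamma>\<^sup>2) / real N"
    using ln_4K2_nonneg unfolding deviation_radius_def c_def by (simp add: power_divide)
  then have "2 * (deviation_radius \<gamma> N)\<^sup>2 * (\<gamma> * real N)\<^sup>2
      = 2 * ((1 + 2 * c) / (2 * \<gamma>\<^sup>2) / real N) * (\<gamma> * real N)\<^sup>2"
    by (simp only:)
  also have "\<dots> = (1 + 2 * c) * real N"
    using N \<gamma> by (simp add: field_simps power2_eq_square)
  finally have exponent: "2 * (deviation_radius \<gamma> N)\<^sup>2 * (\<gamma> * real N)\<^sup>2 = (1 + 2 * c) * real N" .
  have "(4 * (real K)\<^sup>2) ^ (2 * N) = exp (ln ((4 * (real K)\<^sup>2) ^ (2 * N)))"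
    using pos by simp
  also have "ln ((4 * (real K)\<^sup>2) ^ (2 * N)) = 2 * c * real N"
    unfolding ln_realpow c_def by simp
  finally have "(4 * (real K)\<^sup>2) ^ (2 * N) = exp (2 * c * real N)" .
  with exponent have "(4 * (real K)\<^sup>2) ^ (2 * N) * exp (-2 * (deviation_radius \<gamma> N)\<^sup>2 * (\<gamma> * real N)\<^sup>2)
      = exp (- real N)"
    by (simp add: exp_add[symmetric] algebra_simps)
  moreover have "deviation_radius \<gamma> N > 0"
    using \<gamma> N by (intro deviation_radius_pos) auto
  ultimately show ?thesis
    using prob_deviation_event_le[OF N \<gamma>] by metis
qed

lemma AE_eventually_not_deviation_event:
  assumes \<gamma>: "0 < \<gamma>" "\<gamma> \<le> 1"
  shows "AE \<omega> in M. \<forall>\<^sub>F N in sequentially. \<omega> \<notin> deviation_event N \<gamma> (deviation_radius \<gamma> N)"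
proof -
  define A where "A N = (if N \<ge> 1 then deviation_event N \<gamma> (deviation_radius \<gamma> N) else {})" for N
  have "summable (\<lambda>N. exp (- real N))"
    using summable_geometric[of "exp (-1) :: real"] by (simp add: exp_of_nat_mult[symmetric])
  then have "summable (\<lambda>N. prob (A N))"
    by (rule summable_comparison_test[rotated])
      (auto simp: A_def prob_deviation_event_radius \<gamma>)
  then have "AE \<omega> in M. \<forall>\<^sub>F N in sequentially. \<omega> \<in> space M - A N"
    by (intro borel_cantelli_AE1) (auto simp: A_def deviation_event_sets emeasure_eq_measure)
  then show ?thesis
    by (rule AE_mp[OF _ AE_I2]) (auto elim!: eventually_mono[OF eventually_conj[OF eventually_ge_at_top[of 1]]]
        simp: A_def)
qed

lemma small_deviation_noise:
  assumes "N \<ge> 1" "\<omega> \<in> space M" "\<omega> \<notin> deviation_event N \<gamma> t" "z \<in> Zgam K N \<gamma>"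
  shows "small_deviation K N t (noise N \<omega>) z"
  using assms by (intro small_deviation_if_bilinear_form_less) (auto simp: deviation_event_def not_le)

lemma AE_Max_norm_P_hat_error_tendsto_0:
  assumes \<gamma>: "0 < \<gamma>" "\<gamma> \<le> 1" and nrm: "is_mat_norm K nrm"
    and nonempty: "\<forall>\<^sub>F N in sequentially. Zgam K N \<gamma> \<noteq> {}"
  shows "AE \<omega> in M. (\<lambda>N. Max ((\<lambda>z. nrm (restrictK K (\<lambda>p q.
      P_hat N (\<lambda>i j. X N i j \<omega>) z p q - P_bar M N (X N) z p q))) ` Zgam K N \<gamma>)) \<longlonglongrightarrow> 0"
proof -
  define C where "C = (\<Sum>(p, q)\<in>{1..K} \<times> {1..K}. nrm (unit_matrix p q))"
  define F where "F N \<omega> = Max ((\<lambda>z. nrm (restrictK K (\<lambda>p q.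
      P_hat N (\<lambda>i j. X N i j \<omega>) z p q - P_bar M N (X N) z p q))) ` Zgam K N \<gamma>)" for N \<omega>
  have F_bound: "0 \<le> F N \<omega> \<and> F N \<omega> \<le> C * deviation_radius \<gamma> N"
    if N: "N \<ge> 1" and \<omega>: "\<omega> \<in> space M" "\<omega> \<notin> deviation_event N \<gamma> (deviation_radius \<gamma> N)"
      and ne: "Zgam K N \<gamma> \<noteq> {}" for N \<omega>
  proof -
    have "nrm (restrictK K (\<lambda>p q. P_hat N (\<lambda>i j. X N i j \<omega>) z p q - P_bar M N (X N) z p q))
        \<le> C * deviation_radius \<gamma> N" if z: "z \<in> Zgam K N \<gamma>" for z
      using small_deviation_noise[OF N \<omega> z] unfolding C_def P_hat_error_eq_P_hat_noise[OF N]
      by (intro mat_norm_restrictK_le[OF nrm]) (auto simp: small_deviation_def)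
    moreover obtain z where "z \<in> Zgam K N \<gamma>" using ne by blast
    ultimately show ?thesis
      unfolding F_def using finite_Zgam[of K N \<gamma>] ne
      by (auto simp: Max_le_iff Max_ge_iff intro!: bexI mat_norm_nonneg[OF nrm restrictK_KMat])
  qed
  have lim: "(\<lambda>N. C * deviation_radius \<gamma> N) \<longlonglongrightarrow> 0"
    using tendsto_mult_right_zero[OF deviation_radius_tendsto_0] .
  show ?thesis
    using AE_eventually_not_deviation_event[OF \<gamma>] AE_space
  proof (eventually_elim, fold F_def)
    case (elim \<omega>)
    have "\<forall>\<^sub>F N in sequentially. 0 \<le> F N \<omega> \<and> F N \<omega> \<le> C * deviation_radius \<gamma> N"
      using elim(1) nonempty eventually_ge_at_top[of 1] by eventually_elim (use F_bound elim(2) in blast)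
    then show "(\<lambda>N. F N \<omega>) \<longlonglongrightarrow> 0"
      by (intro tendsto_sandwich[OF _ _ tendsto_const lim]) (auto elim: eventually_mono)
  qed
qed

end

section \<open>Consistency of the minimiser\<close>

locale block_model_clustering = block_model +
  fixes zhat :: "nat \<Rightarrow> 'a \<Rightarrow> nat \<Rightarrow> nat"
  assumes zstar_lab: "\<And>N. N \<ge> 1 \<Longrightarrow> zstar N \<in> labels K N"
    and zhat_meas: "\<And>N z. N \<ge> 1 \<Longrightarrow> z \<in> labels K N \<Longrightarrow> {\<omega> \<in> space M. zhat N \<omega> = z} \<in> sets M"
    and zhat_argmin: "\<And>N \<omega>. N \<ge> 1 \<Longrightarrow> \<omega> \<in> space M \<Longrightarrow>
        zhat N \<omega> \<in> labels K N \<and>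
        (\<forall>z\<in>labels K N. L_hat K N (\<lambda>i j. X N i j \<omega>) (zhat N \<omega>) \<le> L_hat K N (\<lambda>i j. X N i j \<omega>) z)"
begin

lemma Delta_le_deviation_radius:
  assumes N: "N \<ge> 1" and \<omega>: "\<omega> \<in> space M" "\<omega> \<notin> deviation_event N \<gamma> (deviation_radius \<gamma> N)"
    and zhat: "zhat N \<omega> \<in> Zgam K N \<gamma>" and zstar: "zstar N \<in> Zgam K N \<gamma>"
    and \<delta>: "0 < \<delta>" "\<delta> \<le> delta_bar M K N (X N) (zhat N \<omega>)"
  shows "Delta K N (zstar N) (zhat N \<omega>) \<le> 32 * real K * deviation_radius \<gamma> N / \<delta>"
proof (rule Delta_le_of_small_deviation[where B=Pstar])
  have noise: "(\<lambda>i j. X N i j \<omega> - Pstar (zstar N i) (zstar N j)) = noise N \<omega>"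
    by (simp add: noise_def[abs_def] mean_matrix_def)
  show "small_deviation K N (deviation_radius \<gamma> N) (\<lambda>i j. X N i j \<omega> - Pstar (zstar N i) (zstar N j)) (zhat N \<omega>)"
    "small_deviation K N (deviation_radius \<gamma> N) (\<lambda>i j. X N i j \<omega> - Pstar (zstar N i) (zstar N j)) (zstar N)"
    unfolding noise using small_deviation_noise[OF N \<omega>] zhat zstar by auto
  show "\<delta> \<le> sep K (P_hat N (\<lambda>i j. Pstar (zstar N i) (zstar N j)) (zhat N \<omega>))"
    using \<delta>(2) by (simp add: delta_bar_def P_bar_eq_P_hat_mean_matrix[OF N] mean_matrix_def[abs_def])
qed (use N K2 zstar_lab zhat_argmin[OF N \<omega>(1)] \<delta>(1) in auto)

lemma common_balance_level:
  assumes "\<exists>\<gamma>. 0 < \<gamma> \<and> \<gamma> \<le> 1 / real K \<and>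
        (\<forall>\<gamma>'. 0 < \<gamma>' \<and> \<gamma>' < \<gamma> \<longrightarrow> (\<forall>\<^sub>F N in sequentially. zstar N \<in> Zgam K N \<gamma>'))"
    and "\<exists>\<gamma>0 \<delta>0 N1. 0 < \<gamma>0 \<and> \<gamma>0 \<le> 1 / real K \<and> 0 < \<delta>0 \<and>
        (\<forall>N\<ge>N1. AE \<omega> in M. zhat N \<omega> \<in> Zgam K N \<gamma>0 \<and> delta_bar M K N (X N) (zhat N \<omega>) \<ge> \<delta>0)"
  obtains \<gamma> \<delta> N0 where "0 < \<gamma>" "\<gamma> \<le> 1" "0 < \<delta>"
    "\<And>N. N \<ge> N0 \<Longrightarrow> zstar N \<in> Zgam K N \<gamma>"
    "\<And>N. N \<ge> N0 \<Longrightarrow> AE \<omega> in M. zhat N \<omega> \<in> Zgam K N \<gamma> \<and> \<delta> \<le> delta_bar M K N (X N) (zhat N \<omega>)"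
proof -
  obtain \<gamma>0 \<delta>0 N1 where \<gamma>0: "0 < \<gamma>0" "\<gamma>0 \<le> 1 / real K" and \<delta>0: "0 < \<delta>0"
    and zhat: "\<And>N. N \<ge> N1 \<Longrightarrow>
      AE \<omega> in M. zhat N \<omega> \<in> Zgam K N \<gamma>0 \<and> \<delta>0 \<le> delta_bar M K N (X N) (zhat N \<omega>)"
    using assms(2) by blast
  obtain \<gamma>A where "0 < \<gamma>A" "\<forall>\<^sub>F N in sequentially. zstar N \<in> Zgam K N (\<gamma>A / 2)"
    using assms(1) by force
  then obtain N2 where zstar: "\<And>N. N \<ge> N2 \<Longrightarrow> zstar N \<in> Zgam K N (\<gamma>A / 2)"
    unfolding eventually_sequentially by blast
  let ?\<gamma> = "min \<gamma>0 (\<gamma>A / 2)"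
  show thesis
  proof (rule that[of ?\<gamma> \<delta>0 "max N1 N2"])
    show "0 < ?\<gamma>" "?\<gamma> \<le> 1" "0 < \<delta>0"
      using \<gamma>0 \<delta>0 \<open>0 < \<gamma>A\<close> K2 order_trans[of \<gamma>0 "1 / real K" 1] by (auto simp: min_le_iff_disj)
    show "zstar N \<in> Zgam K N ?\<gamma>" if "N \<ge> max N1 N2" for N
      using that by (intro subsetD[OF Zgam_antimono[OF min.cobounded2]] zstar) auto
    show "AE \<omega> in M. zhat N \<omega> \<in> Zgam K N ?\<gamma> \<and> \<delta>0 \<le> delta_bar M K N (X N) (zhat N \<omega>)"
      if "N \<ge> max N1 N2" for N
      using zhat[of N] that Zgam_antimono[of ?\<gamma> \<gamma>0 K N] by (auto elim!: eventually_mono)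
  qed
qed

lemma AE_Max_norm_P_hat_error_tendsto_0_if_zhat_balanced:
  assumes "0 < \<gamma>" "\<gamma> < \<gamma>0" "\<gamma>0 \<le> 1" and nrm: "is_mat_norm K nrm"
    and zhat: "\<forall>N\<ge>N1. AE \<omega> in M. zhat N \<omega> \<in> Zgam K N \<gamma>0"
  shows "AE \<omega> in M. (\<lambda>N. Max ((\<lambda>z. nrm (restrictK K (\<lambda>p q.
      P_hat N (\<lambda>i j. X N i j \<omega>) z p q - P_bar M N (X N) z p q))) ` Zgam K N \<gamma>)) \<longlonglongrightarrow> 0"
proof (rule AE_Max_norm_P_hat_error_tendsto_0[OF _ _ nrm])
  show "\<forall>\<^sub>F N in sequentially. Zgam K N \<gamma> \<noteq> {}"
    using eventually_ge_at_top[of N1]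
  proof eventually_elim
    case (elim N)
    then have "AE \<omega> in M. zhat N \<omega> \<in> Zgam K N \<gamma>0"
      using zhat by blast
    then have "Zgam K N \<gamma>0 \<noteq> {}"
      using AE_False by force
    then show ?case using Zgam_antimono[of \<gamma> \<gamma>0] assms(2) by auto
  qed
qed (use assms in auto)

context
  fixes \<gamma> \<delta> :: real and N0 :: nat
  assumes \<gamma>: "0 < \<gamma>" "\<gamma> \<le> 1" and \<delta>: "0 < \<delta>"
    and zstar_balanced: "\<And>N. N \<ge> N0 \<Longrightarrow> zstar N \<in> Zgam K N \<gamma>"
    and zhat_good: "\<And>N. N \<ge> N0 \<Longrightarrow>
      AE \<omega> in M. zhat N \<omega> \<in> Zgam K N \<gamma> \<and> \<delta> \<le> delta_bar M K N (X N) (zhat N \<omega>)"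
begin

lemma AE_Delta_le_deviation_radius:
  assumes "N \<ge> max N0 1"
  shows "AE \<omega> in M. \<omega> \<notin> deviation_event N \<gamma> (deviation_radius \<gamma> N) \<longrightarrow>
    Delta K N (zstar N) (zhat N \<omega>) \<le> 32 * real K * deviation_radius \<gamma> N / \<delta>"
proof -
  have N0: "N \<ge> N0" and N: "N \<ge> 1" using assms by auto
  show ?thesis
    using zhat_good[OF N0] AE_space
    by eventually_elim (auto intro: Delta_le_deviation_radius[OF N] zstar_balanced[OF N0] \<delta>)
qed

lemma AE_Delta_tendsto_0: "AE \<omega> in M. (\<lambda>N. Delta K N (zstar N) (zhat N \<omega>)) \<longlonglongrightarrow> 0"
proof -
  have lim: "(\<lambda>N. 32 * real K * deviation_radius \<gamma> N / \<delta>) \<longlonglongrightarrow> 0"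
    using tendsto_divide_zero[OF tendsto_mult_right_zero[OF deviation_radius_tendsto_0]] by simp
  have "AE \<omega> in M. \<forall>N. N \<ge> max N0 1 \<longrightarrow> \<omega> \<notin> deviation_event N \<gamma> (deviation_radius \<gamma> N) \<longrightarrow>
    Delta K N (zstar N) (zhat N \<omega>) \<le> 32 * real K * deviation_radius \<gamma> N / \<delta>"
    unfolding AE_all_countable using AE_Delta_le_deviation_radius by (auto intro: AE_I2)
  moreover note AE_eventually_not_deviation_event[OF \<gamma>]
  ultimately show ?thesis
  proof eventually_elim
    case (elim \<omega>)
    have "\<forall>\<^sub>F N in sequentially. Delta K N (zstar N) (zhat N \<omega>) \<le> 32 * real K * deviation_radius \<gamma> N / \<delta>"
      using elim(2) eventually_ge_at_top[of "max N0 1"] by eventually_elim (use elim(1) in blast)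
    moreover have "\<forall>\<^sub>F N in sequentially. 0 \<le> Delta K N (zstar N) (zhat N \<omega>)"
      using K2 by (simp add: Delta_nonneg)
    ultimately show ?case
      by (intro tendsto_sandwich[OF _ _ tendsto_const lim])
  qed
qed

lemma prob_Delta_le_powr:
  assumes r: "r \<le> 1 / 2"
  shows "\<exists>C>0. \<exists>N1. \<forall>N\<ge>N1.
    1 - exp (- real N) \<le> prob {\<omega> \<in> space M. Delta K N (zstar N) (zhat N \<omega>) \<le> C * real N powr (- r)}"
proof (intro exI conjI allI impI)
  let ?C = "32 * real K * deviation_radius \<gamma> 1 / \<delta>"
  show "?C > 0" using K2 \<gamma> \<delta> by (simp add: deviation_radius_pos)
  fix N assume N: "N \<ge> max N0 1"
  define u where "u = ?C * real N powr (- r)"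
  let ?S = "{\<omega> \<in> space M. Delta K N (zstar N) (zhat N \<omega>) \<le> u}"
  have "?S = (\<Union>z\<in>{z \<in> labels K N. Delta K N (zstar N) z \<le> u}. {\<omega> \<in> space M. zhat N \<omega> = z})"
    using zhat_argmin N by auto
  then have S: "?S \<in> sets M"
    using N by (auto intro!: sets.finite_UN zhat_meas finite_subset[OF _ finite_labels])
  have bound: "32 * real K * deviation_radius \<gamma> N / \<delta> \<le> u"
    unfolding u_def using deviation_radius_le_powr[of N r \<gamma>] N r K2 \<delta> by (simp add: divide_right_mono)
  have "AE \<omega> in M. \<omega> \<in> space M - deviation_event N \<gamma> (deviation_radius \<gamma> N) \<longrightarrow> \<omega> \<in> ?S"
    using AE_Delta_le_deviation_radius[OF N] by eventually_elim (use bound in auto)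
  then have "prob (space M - deviation_event N \<gamma> (deviation_radius \<gamma> N)) \<le> prob ?S"
    by (rule finite_measure_mono_AE[OF _ S])
  moreover have "prob (deviation_event N \<gamma> (deviation_radius \<gamma> N)) \<le> exp (- real N)"
    using N \<gamma> by (intro prob_deviation_event_radius) auto
  ultimately show "1 - exp (- real N)
      \<le> prob {\<omega> \<in> space M. Delta K N (zstar N) (zhat N \<omega>) \<le> ?C * real N powr (- r)}"
    using prob_compl[OF deviation_event_sets, of N \<gamma>] N unfolding u_def by simp
qed

end

end

theorem theorem1:
  fixes M :: "'a measure"
    and K :: nat
    and Pstar :: "nat \<Rightarrow> nat \<Rightarrow> real"
    and zstar :: "nat \<Rightarrow> nat \<Rightarrow> nat"
    and X :: "nat \<Rightarrow> nat \<Rightarrow> nat \<Rightarrow> 'a \<Rightarrow> real"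
    and zhat :: "nat \<Rightarrow> 'a \<Rightarrow> nat \<Rightarrow> nat"
  assumes P: "prob_space M"
    and K2: "K \<ge> 2"
    and zstar_lab: "\<And>N. N \<ge> 1 \<Longrightarrow> zstar N \<in> labels K N"
    and indep: "\<And>N. N \<ge> 1 \<Longrightarrow>
        prob_space.indep_vars M (\<lambda>_. borel) (\<lambda>(i, j). X N i j) ({1..N} \<times> {1..N})"
    and range01: "\<And>N i j \<omega>. N \<ge> 1 \<Longrightarrow> i \<in> {1..N} \<Longrightarrow> j \<in> {1..N} \<Longrightarrow> \<omega> \<in> space M \<Longrightarrow>
        0 \<le> X N i j \<omega> \<and> X N i j \<omega> \<le> 1"
    and ident: "\<And>N i j i' j'. N \<ge> 1 \<Longrightarrow> i \<in> {1..N} \<Longrightarrow> j \<in> {1..N} \<Longrightarrow>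
        i' \<in> {1..N} \<Longrightarrow> j' \<in> {1..N} \<Longrightarrow>
        zstar N i = zstar N i' \<Longrightarrow> zstar N j = zstar N j' \<Longrightarrow>
        distr M borel (X N i j) = distr M borel (X N i' j')"
    and mean: "\<And>N i j. N \<ge> 1 \<Longrightarrow> i \<in> {1..N} \<Longrightarrow> j \<in> {1..N} \<Longrightarrow>
        (\<integral>\<omega>. X N i j \<omega> \<partial>M) = Pstar (zstar N i) (zstar N j)"
    and A1: "sep K Pstar > 0"
    and A2: "\<exists>\<gamma>. 0 < \<gamma> \<and> \<gamma> \<le> 1 / real K \<and>
        (\<forall>\<gamma>'. 0 < \<gamma>' \<and> \<gamma>' < \<gamma> \<longrightarrow> (\<forall>\<^sub>F N in sequentially. zstar N \<in> Zgam K N \<gamma>'))"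
    and zhat_meas: "\<And>N z. N \<ge> 1 \<Longrightarrow> z \<in> labels K N \<Longrightarrow>
        {\<omega> \<in> space M. zhat N \<omega> = z} \<in> sets M"
    and zhat_argmin: "\<And>N \<omega>. N \<ge> 1 \<Longrightarrow> \<omega> \<in> space M \<Longrightarrow>
        zhat N \<omega> \<in> labels K N \<and>
        (\<forall>z\<in>labels K N. L_hat K N (\<lambda>i j. X N i j \<omega>) (zhat N \<omega>)
                          \<le> L_hat K N (\<lambda>i j. X N i j \<omega>) z)"
    and zhat_good: "\<exists>\<gamma>0 \<delta>0 N1. 0 < \<gamma>0 \<and> \<gamma>0 \<le> 1 / real K \<and> 0 < \<delta>0 \<and>
        (\<forall>N\<ge>N1. AE \<omega> in M. zhat N \<omega> \<in> Zgam K N \<gamma>0 \<and>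
                    delta_bar M K N (X N) (zhat N \<omega>) \<ge> \<delta>0)"
  shows "(AE \<omega> in M. (\<lambda>N. Delta K N (zstar N) (zhat N \<omega>)) \<longlonglongrightarrow> 0)
    \<and> (\<forall>\<gamma>0 \<delta>0 N1. (0 < \<gamma>0 \<and> \<gamma>0 \<le> 1 / real K \<and> 0 < \<delta>0 \<and>
          (\<forall>N\<ge>N1. AE \<omega> in M. zhat N \<omega> \<in> Zgam K N \<gamma>0 \<and>
                    delta_bar M K N (X N) (zhat N \<omega>) \<ge> \<delta>0)) \<longrightarrow>
        (\<forall>\<gamma>'. 0 < \<gamma>' \<and> \<gamma>' < \<gamma>0 \<longrightarrow>
          (\<forall>nrm. is_mat_norm K nrm \<longrightarrow>
            (AE \<omega> in M. (\<lambda>N. Max ((\<lambda>z. nrm (restrictK K (\<lambda>p q.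
                 P_hat N (\<lambda>i j. X N i j \<omega>) z p q - P_bar M N (X N) z p q))) ` Zgam K N \<gamma>'))
               \<longlonglongrightarrow> 0))))
    \<and> (\<forall>r. 0 < r \<and> r < 1 / 3 \<longrightarrow>
        (\<exists>C > 0. \<exists>N0. \<forall>N\<ge>N0.
          prob_space.prob M {\<omega> \<in> space M. Delta K N (zstar N) (zhat N \<omega>) \<le> C * real N powr (- r)}
            \<ge> 1 - exp (- real N)))"
proof -
  interpret block_model_clustering M K Pstar zstar X zhat
    by (intro block_model_clustering.intro block_model.intro block_model_axioms.intro
        block_model_clustering_axioms.intro P) (use K2 zstar_lab indep range01 mean zhat_meas zhat_argmin in auto)
  obtain \<gamma> \<delta> N0 where balanced: "0 < \<gamma>" "\<gamma> \<le> 1" "0 < \<delta>"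
    "\<And>N. N \<ge> N0 \<Longrightarrow> zstar N \<in> Zgam K N \<gamma>"
    "\<And>N. N \<ge> N0 \<Longrightarrow> AE \<omega> in M. zhat N \<omega> \<in> Zgam K N \<gamma> \<and> \<delta> \<le> delta_bar M K N (X N) (zhat N \<omega>)"
    using common_balance_level[OF A2 zhat_good] by blast
  have "1 / real K \<le> 1" using K2 by simp
  then have "\<forall>\<gamma>0 \<delta>0 N1. (0 < \<gamma>0 \<and> \<gamma>0 \<le> 1 / real K \<and> 0 < \<delta>0 \<and>
          (\<forall>N\<ge>N1. AE \<omega> in M. zhat N \<omega> \<in> Zgam K N \<gamma>0 \<and> delta_bar M K N (X N) (zhat N \<omega>) \<ge> \<delta>0)) \<longrightarrow>
        (\<forall>\<gamma>'. 0 < \<gamma>' \<and> \<gamma>' < \<gamma>0 \<longrightarrow> (\<forall>nrm. is_mat_norm K nrm \<longrightarrow>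
            (AE \<omega> in M. (\<lambda>N. Max ((\<lambda>z. nrm (restrictK K (\<lambda>p q.
                 P_hat N (\<lambda>i j. X N i j \<omega>) z p q - P_bar M N (X N) z p q))) ` Zgam K N \<gamma>')) \<longlonglongrightarrow> 0)))"
    by (auto intro!: AE_Max_norm_P_hat_error_tendsto_0_if_zhat_balanced elim: eventually_mono)
  moreover have "\<exists>C>0. \<exists>N0. \<forall>N\<ge>N0.
      1 - exp (- real N) \<le> prob {\<omega> \<in> space M. Delta K N (zstar N) (zhat N \<omega>) \<le> C * real N powr (- r)}"
    if "r < 1 / 3" for r
  proof -
    have "r \<le> 1 / 2" using that by linarith
    from prob_Delta_le_powr[OF balanced this] show ?thesis .
  qed
  ultimately show ?thesis
    using AE_Delta_tendsto_0[OF balanced] by blast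
qed

end
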